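(* Let $L:\mathbb{R}^d\to\mathbb{R}^{\mathcal{Y}}_+$ be a polyhedral loss. Then $L$ is minimizable and elicits a property $\Gamma:=\mathrm{prop}[L]$. Moreover, the range of $\Gamma$, namely $\{\Gamma(p)\subseteq\mathbb{R}^d:p\in\Delta_{\mathcal{Y}}\}$, is a finite set of closed polyhedra.
   Context: $\mathcal{Y}$ is a finite label set, $\Delta_{\mathcal{Y}}$ the probability simplex, $\mathbb{R}^{\mathcal{Y}}_+$ the nonnegative orthant. $L:\mathbb{R}^d\to\mathbb{R}^{\mathcal{Y}}_+$ is polyhedral if each $u\mapsto L(u)_y$ is a pointwise maximum of finitely many affine functions. $L$ is minimizable if $\inf_u\langle p,L(u)\rangle$ is attained for every $p\in\Delta_{\mathcal{Y}}$; in that case it elicits $\mathrm{prop}[L](p)=\arg\min_u\langle p,L(u)\rangle$. *)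

theory Defs
  imports "HOL-Analysis.Analysis"
begin

text \<open>Losses L : R^d -> R^Y_+ are modelled as functions real^'d => 'y => real,
  with the finite label set Y given by the finite type 'y.\<close>

definition prob_simplex :: "('y::finite \<Rightarrow> real) set" where
  "prob_simplex = {p. (\<forall>y. 0 \<le> p y) \<and> (\<Sum>y\<in>UNIV. p y) = 1}"

definition exp_loss :: "('u \<Rightarrow> 'y::finite \<Rightarrow> real) \<Rightarrow> ('y \<Rightarrow> real) \<Rightarrow> 'u \<Rightarrow> real" where
  "exp_loss L p u = (\<Sum>y\<in>UNIV. p y * L u y)"

definition polyhedral_loss :: "(real^'d \<Rightarrow> 'y::finite \<Rightarrow> real) \<Rightarrow> bool" where
  "polyhedral_loss L \<longleftrightarrow>
     (\<forall>y. \<exists>A :: ((real^'d) \<times> real) set. finite A \<and> A \<noteq> {} \<and>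
          (\<forall>u. L u y = Max ((\<lambda>(a,b). a \<bullet> u + b) ` A)))"

definition nonneg_loss :: "('u \<Rightarrow> 'y \<Rightarrow> real) \<Rightarrow> bool" where
  "nonneg_loss L \<longleftrightarrow> (\<forall>u y. 0 \<le> L u y)"

definition minimizable :: "('u \<Rightarrow> 'y::finite \<Rightarrow> real) \<Rightarrow> bool" where
  "minimizable L \<longleftrightarrow>
     (\<forall>p\<in>prob_simplex. \<exists>u. \<forall>v. exp_loss L p u \<le> exp_loss L p v)"

definition prop_of :: "('u \<Rightarrow> 'y::finite \<Rightarrow> real) \<Rightarrow> ('y \<Rightarrow> real) \<Rightarrow> 'u set" where
  "prop_of L p = {u. \<forall>v. exp_loss L p u \<le> exp_loss L p v}"

end

theory Submission
  imports Defs
begin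

(* Write every coordinate of L as the maximum of a finite set of affine pieces.  For p in the
   simplex the expected loss is again such a maximum, over the choices of one piece per label;
   being bounded below by 0 it attains its minimum (linear programming on its epigraph), and the
   minimisers form a sublevel set, i.e. a polyhedron.
   For finiteness, call the sets of pieces active at u (one set per label) the pattern of u.
   If u minimises the expected loss and v has the same pattern as u, then each coordinate, hence
   the expected loss, is affine on the line through v and u slightly beyond u, so optimality
   of u forces that of v.  Thus every argmin set is a union of pattern classes, and there are
   only finitely many patterns. *)

definition halfspaces_Inter :: "('a::real_inner \<times> real) set \<Rightarrow> 'a set" where
  "halfspaces_Inter J = {x. \<forall>(a,b)\<in>J. a \<bullet> x \<le> b}"

lemma halfspaces_Inter_insert [simp]:
  "halfspaces_Inter (insert (a,b) J) = halfspaces_Inter J \<inter> {x. a \<bullet> x \<le> b}"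
  by (auto simp: halfspaces_Inter_def)

lemma halfspaces_Inter_eq_INT: "halfspaces_Inter J = (\<Inter>(a,b)\<in>J. {x. a \<bullet> x \<le> b})"
  by (auto simp: halfspaces_Inter_def)

lemma convex_halfspaces_Inter: "convex (halfspaces_Inter J)"
  unfolding halfspaces_Inter_eq_INT by (auto intro!: convex_INT convex_halfspace_le)

lemma polyhedron_halfspaces_Inter:
  fixes J :: "('a::euclidean_space \<times> real) set"
  shows "finite J \<Longrightarrow> polyhedron (halfspaces_Inter J)"
  unfolding halfspaces_Inter_eq_INT by (auto intro!: polyhedron_Inter polyhedron_halfspace_le)

lemma inner_const_on_affine_if_bdd_below:
  assumes "affine S" and "x \<in> S" and "z \<in> S" and "\<forall>y\<in>S. B \<le> h \<bullet> y"
  shows "h \<bullet> x = h \<bullet> z"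
proof -
  have "h \<bullet> z \<le> h \<bullet> x" if z: "z \<in> S" and x: "x \<in> S" for x z
  proof (rule ccontr)
    assume "\<not> h \<bullet> z \<le> h \<bullet> x"
    then have d: "h \<bullet> z - h \<bullet> x > 0" by simp
    define t where "t = (h \<bullet> z - B + 1) / (h \<bullet> z - h \<bullet> x)"
    have "(1 - t) *\<^sub>R z + t *\<^sub>R x \<in> S" using mem_affine[OF assms(1) z x] by simp
    then have "B \<le> h \<bullet> ((1 - t) *\<^sub>R z + t *\<^sub>R x)" using assms(4) by blast
    also have "\<dots> = h \<bullet> z - t * (h \<bullet> z - h \<bullet> x)"
      by (simp add: inner_add_right algebra_simps)
    also have "\<dots> = B - 1" using d by (simp add: t_def field_simps)
    finally show False by simp
  qed
  then show ?thesis using assms(2,3) by (meson order_antisym)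
qed

lemma convex_segment_hyperplane_inner_le:
  assumes "convex C" and "x \<in> C" and "a \<bullet> x \<le> b" and "x' \<in> C" and "b < a \<bullet> x'"
    and "h \<bullet> x' \<le> h \<bullet> x"
  shows "\<exists>z\<in>C. a \<bullet> z = b \<and> h \<bullet> z \<le> h \<bullet> x"
proof
  define t where "t = (b - a \<bullet> x) / (a \<bullet> x' - a \<bullet> x)"
  define z where "z = (1 - t) *\<^sub>R x + t *\<^sub>R x'"
  have d: "a \<bullet> x' - a \<bullet> x > 0" using assms(3,5) by simp
  have t: "0 \<le> t" "t \<le> 1" using d assms(3,5) by (auto simp: t_def field_simps)
  show "z \<in> C" unfolding z_def using assms(1,2,4) t by (simp add: convexD_alt)
  have "a \<bullet> z = a \<bullet> x + t * (a \<bullet> x' - a \<bullet> x)"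
    by (simp add: z_def inner_add_right algebra_simps)
  also have "\<dots> = b" using d by (simp add: t_def field_simps)
  finally have "a \<bullet> z = b" .
  moreover have "h \<bullet> z = (1 - t) * (h \<bullet> x) + t * (h \<bullet> x')"
    by (simp add: z_def inner_add_right)
  moreover have "\<dots> \<le> h \<bullet> x" using assms(6) t by (intro convex_bound_le) auto
  ultimately show "a \<bullet> z = b \<and> h \<bullet> z \<le> h \<bullet> x" by simp
qed

lemma inner_attains_min_on_affine_Int_halfspaces:
  fixes h :: "'a::real_inner"
  assumes "finite J" and "affine S" and "S \<inter> halfspaces_Inter J \<noteq> {}"
    and "\<forall>x\<in>S \<inter> halfspaces_Inter J. B \<le> h \<bullet> x"
  shows "\<exists>z\<in>S \<inter> halfspaces_Inter J. \<forall>x\<in>S \<inter> halfspaces_Inter J. h \<bullet> z \<le> h \<bullet> x"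
  using assms
proof (induction J arbitrary: S rule: finite_induct)
  case empty
  then obtain z where "z \<in> S" by (auto simp: halfspaces_Inter_def)
  moreover have "h \<bullet> z \<le> h \<bullet> x" if "x \<in> S" for x
    using inner_const_on_affine_if_bdd_below[of S z x B h] empty \<open>z \<in> S\<close> that
    by (simp add: halfspaces_Inter_def)
  ultimately show ?case by (auto simp: halfspaces_Inter_def)
next
  case (insert q J)
  obtain a0 b0 where q: "q = (a0, b0)" by force
  define P' where "P' = S \<inter> halfspaces_Inter J"
  define P where "P = P' \<inter> {x. a0 \<bullet> x \<le> b0}"
  have P: "S \<inter> halfspaces_Inter (insert q J) = P" by (auto simp: P_def P'_def q)
  have "P \<noteq> {}" and bdd: "\<forall>x\<in>P. B \<le> h \<bullet> x" using insert.prems by (auto simp: P)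
  have "convex P'"
    unfolding P'_def by (intro convex_Int affine_imp_convex insert.prems convex_halfspaces_Inter)
  show ?case
  proof (cases "\<exists>x'\<in>P'. b0 < a0 \<bullet> x' \<and> (\<forall>x\<in>P. h \<bullet> x' \<le> h \<bullet> x)")
    case True
    \<comment> \<open>An outside point below all of P lets us push every point of P onto the hyperplane
      a0 \<bullet> x = b0 without increasing h, which reduces to one constraint less.\<close>
    then obtain x' where x': "x' \<in> P'" "b0 < a0 \<bullet> x'" "\<forall>x\<in>P. h \<bullet> x' \<le> h \<bullet> x" by blast
    define S' where "S' = S \<inter> {x. a0 \<bullet> x = b0}"
    have "affine S'" unfolding S'_def using insert.prems(1) affine_hyperplane by blast
    have Q: "S' \<inter> halfspaces_Inter J = P' \<inter> {x. a0 \<bullet> x = b0}"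
      by (auto simp: S'_def P'_def)
    have push: "\<exists>z\<in>S' \<inter> halfspaces_Inter J. h \<bullet> z \<le> h \<bullet> x" if "x \<in> P" for x
      using convex_segment_hyperplane_inner_le[OF \<open>convex P'\<close> _ _ x'(1,2)] x'(3) that
      unfolding Q P_def by blast
    have sub: "S' \<inter> halfspaces_Inter J \<subseteq> P" unfolding Q P_def by auto
    have "S' \<inter> halfspaces_Inter J \<noteq> {}" using push \<open>P \<noteq> {}\<close> by blast
    moreover have "\<forall>x\<in>S' \<inter> halfspaces_Inter J. B \<le> h \<bullet> x" using sub bdd by blast
    ultimately obtain z where z: "z \<in> S' \<inter> halfspaces_Inter J"
      and min: "\<forall>x\<in>S' \<inter> halfspaces_Inter J. h \<bullet> z \<le> h \<bullet> x"
      using insert.IH[OF \<open>affine S'\<close>] by blast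
    have "h \<bullet> z \<le> h \<bullet> x" if "x \<in> P" for x
      using push[OF that] min by (meson order_trans)
    with z sub show ?thesis unfolding P by blast
  next
    case False
    have "B \<le> h \<bullet> x" if "x \<in> P'" for x
    proof (cases "a0 \<bullet> x \<le> b0")
      case True
      then show ?thesis using that bdd by (auto simp: P_def)
    next
      case outside: False
      then have "\<not> (\<forall>y\<in>P. h \<bullet> x \<le> h \<bullet> y)" using False that by auto
      then obtain y where "y \<in> P" "h \<bullet> y < h \<bullet> x" by (auto simp: not_le)
      moreover have "B \<le> h \<bullet> y" using bdd \<open>y \<in> P\<close> by blast
      ultimately show ?thesis by linarith
    qed
    then have "\<forall>x\<in>P'. B \<le> h \<bullet> x" by blast
    moreover have "P' \<noteq> {}" using \<open>P \<noteq> {}\<close> by (auto simp: P_def)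
    ultimately obtain z where z: "z \<in> P'" "\<forall>x\<in>P'. h \<bullet> z \<le> h \<bullet> x"
      using insert.IH[OF insert.prems(1)] unfolding P'_def by blast
    then have "\<forall>x\<in>P. h \<bullet> z \<le> h \<bullet> x" by (auto simp: P_def)
    then have "a0 \<bullet> z \<le> b0" using False z(1) by (auto simp: not_less)
    with z show ?thesis unfolding P by (auto simp: P_def)
  qed
qed

definition max_affine :: "('a::real_inner \<times> real) set \<Rightarrow> 'a \<Rightarrow> real" where
  "max_affine A x = Max ((\<lambda>(a,b). a \<bullet> x + b) ` A)"

definition active_pieces :: "('a::real_inner \<times> real) set \<Rightarrow> 'a \<Rightarrow> ('a \<times> real) set" where
  "active_pieces A x = {(a,b)\<in>A. a \<bullet> x + b = max_affine A x}"

lemma max_affine_ge: "finite A \<Longrightarrow> q \<in> A \<Longrightarrow> fst q \<bullet> x + snd q \<le> max_affine A x"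
  unfolding max_affine_def by (rule Max_ge) force+

lemma max_affine_le_iff:
  "finite A \<Longrightarrow> A \<noteq> {} \<Longrightarrow> max_affine A x \<le> t \<longleftrightarrow> (\<forall>(a,b)\<in>A. a \<bullet> x + b \<le> t)"
  unfolding max_affine_def by auto

lemma active_pieces_iff:
  "q \<in> active_pieces A x \<longleftrightarrow> q \<in> A \<and> fst q \<bullet> x + snd q = max_affine A x"
  by (cases q) (simp add: active_pieces_def)

lemma active_pieces_nonempty: "finite A \<Longrightarrow> A \<noteq> {} \<Longrightarrow> active_pieces A x \<noteq> {}"
proof -
  assume "finite A" "A \<noteq> {}"
  then have "max_affine A x \<in> (\<lambda>(a,b). a \<bullet> x + b) ` A"
    unfolding max_affine_def by (intro Max_in) auto
  then show ?thesis by (force simp: active_pieces_def)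
qed

lemma sublevel_max_affine:
  "finite A \<Longrightarrow> A \<noteq> {} \<Longrightarrow>
    {x. max_affine A x \<le> t} = halfspaces_Inter ((\<lambda>(a,b). (a, t - b)) ` A)"
  by (auto simp: max_affine_le_iff halfspaces_Inter_def algebra_simps)

lemma polyhedron_sublevel_max_affine:
  fixes A :: "('a::euclidean_space \<times> real) set"
  shows "finite A \<Longrightarrow> A \<noteq> {} \<Longrightarrow> polyhedron {x. max_affine A x \<le> t}"
  by (simp add: sublevel_max_affine polyhedron_halfspaces_Inter)

lemma max_affine_attains_min:
  assumes "finite A" and "A \<noteq> {}" and "\<forall>x. B \<le> max_affine A x"
  shows "\<exists>x. \<forall>y. max_affine A x \<le> max_affine A y"
proof -
  \<comment> \<open>Minimise the height t over the epigraph, a finite intersection of halfspaces in 'a \<times> real.\<close>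
  define J where "J = (\<lambda>(a,b). ((a, -1::real), -b)) ` A"
  have epi: "halfspaces_Inter J = {(x,t). max_affine A x \<le> t}"
    using assms(1,2)
    by (auto simp: J_def halfspaces_Inter_def max_affine_le_iff inner_Pair algebra_simps)
  have "\<exists>z\<in>UNIV \<inter> halfspaces_Inter J. \<forall>w\<in>UNIV \<inter> halfspaces_Inter J.
      (0::'a, 1::real) \<bullet> z \<le> (0, 1) \<bullet> w"
  proof (rule inner_attains_min_on_affine_Int_halfspaces)
    show "finite J" using assms(1) by (simp add: J_def)
    show "UNIV \<inter> halfspaces_Inter J \<noteq> {}" unfolding epi by auto
    show "\<forall>w\<in>UNIV \<inter> halfspaces_Inter J. B \<le> (0::'a, 1::real) \<bullet> w"
      unfolding epi using assms(3) by (auto simp: inner_Pair intro: order_trans)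
  qed simp
  then obtain x t where "max_affine A x \<le> t" "\<forall>y s. max_affine A y \<le> s \<longrightarrow> t \<le> s"
    unfolding epi by (auto simp: inner_Pair)
  then show ?thesis by (meson order_trans order_refl)
qed

definition weighted_sum_pieces ::
    "('i \<Rightarrow> real) \<Rightarrow> 'i set \<Rightarrow> ('i \<Rightarrow> ('a::real_inner \<times> real) set) \<Rightarrow> ('a \<times> real) set" where
  "weighted_sum_pieces p I A =
     (\<lambda>\<sigma>. (\<Sum>i\<in>I. p i *\<^sub>R fst (\<sigma> i), \<Sum>i\<in>I. p i * snd (\<sigma> i))) ` PiE I A"

lemma weighted_sum_pieces_finite_nonempty:
  assumes "finite I" and "\<forall>i\<in>I. finite (A i) \<and> A i \<noteq> {}"
  shows "finite (weighted_sum_pieces p I A)" and "weighted_sum_pieces p I A \<noteq> {}"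
  using assms by (auto simp: weighted_sum_pieces_def finite_PiE PiE_eq_empty_iff)

lemma sum_max_affine:
  assumes "finite I" and "\<forall>i\<in>I. finite (A i) \<and> A i \<noteq> {}" and "\<forall>i\<in>I. 0 \<le> p i"
  shows "(\<Sum>i\<in>I. p i * max_affine (A i) x) = max_affine (weighted_sum_pieces p I A) x"
proof -
  define val where "val \<sigma> = (\<Sum>i\<in>I. p i * (fst (\<sigma> i) \<bullet> x + snd (\<sigma> i)))" for \<sigma>
  have pieces: "(\<lambda>(a,b). a \<bullet> x + b) ` weighted_sum_pieces p I A = val ` PiE I A"
    unfolding weighted_sum_pieces_def image_image
    by (intro image_cong refl) (simp add: val_def inner_sum_left sum.distrib distrib_left)
  have "\<exists>q. q \<in> active_pieces (A i) x" if "i \<in> I" for i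
    using active_pieces_nonempty[of "A i" x] assms(2) that by auto
  then obtain \<sigma> where \<sigma>: "\<forall>i\<in>I. \<sigma> i \<in> active_pieces (A i) x" by metis
  then have mem: "restrict \<sigma> I \<in> PiE I A" by (simp add: active_pieces_iff)
  have attained: "val (restrict \<sigma> I) = (\<Sum>i\<in>I. p i * max_affine (A i) x)"
    unfolding val_def using \<sigma> by (intro sum.cong refl) (simp add: active_pieces_iff)
  have bound: "val \<tau> \<le> (\<Sum>i\<in>I. p i * max_affine (A i) x)" if "\<tau> \<in> PiE I A" for \<tau>
    unfolding val_def using assms that
    by (intro sum_mono mult_left_mono max_affine_ge) (auto simp: PiE_iff)
  have "Max (val ` PiE I A) = (\<Sum>i\<in>I. p i * max_affine (A i) x)"
  proof (rule Max_eqI)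
    show "finite (val ` PiE I A)" using assms(1,2) by (simp add: finite_PiE)
    show "(\<Sum>i\<in>I. p i * max_affine (A i) x) \<in> val ` PiE I A"
      using mem attained by (metis image_eqI)
  qed (use bound in blast)
  then show ?thesis unfolding max_affine_def[of "weighted_sum_pieces p I A"] pieces by simp
qed

lemma max_affine_extrapolate:
  assumes "finite A" and "A \<noteq> {}" and "active_pieces A v = active_pieces A u"
  shows "\<forall>\<^sub>F t in at_right 0.
    max_affine A (u + t *\<^sub>R (u - v)) = (1 + t) * max_affine A u - t * max_affine A v"
proof -
  define aff where "aff q y = fst q \<bullet> y + snd q" for q and y :: 'a
  have aff_line: "aff q (u + t *\<^sub>R (u - v)) = (1 + t) * aff q u - t * aff q v" for q t
    by (simp add: aff_def inner_add_right inner_diff_right algebra_simps)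
  have max_eq: "max_affine A y = Max ((\<lambda>q. aff q y) ` A)" for y
    unfolding max_affine_def aff_def by (simp add: case_prod_beta')
  have active: "q \<in> active_pieces A y \<longleftrightarrow> q \<in> A \<and> aff q y = max_affine A y" for q y
    by (simp add: active_pieces_iff aff_def)
  obtain q0 where q0: "q0 \<in> active_pieces A u" using active_pieces_nonempty assms(1,2) by blast
  then have q0v: "q0 \<in> active_pieces A v" using assms(3) by simp
  \<comment> \<open>Pieces active at u are active at v and so agree with q0 on the whole line; inactive ones
    stay strictly below q0 near u.\<close>
  have "\<forall>\<^sub>F t in at_right 0. aff q (u + t *\<^sub>R (u - v)) \<le> aff q0 (u + t *\<^sub>R (u - v))"
    if q: "q \<in> A" for q
  proof (cases "q \<in> active_pieces A u")
    case True
    then have "q \<in> active_pieces A v" using assms(3) by simp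
    then show ?thesis using True q0 q0v by (simp add: active aff_line)
  next
    case False
    then have gap: "aff q u - aff q0 u < 0"
      using q q0 max_affine_ge[OF assms(1), of q u] by (auto simp: active aff_def)
    have "((\<lambda>t. (aff q u - aff q0 u) + t * ((aff q u - aff q v) - (aff q0 u - aff q0 v)))
        \<longlongrightarrow> (aff q u - aff q0 u) + 0 * ((aff q u - aff q v) - (aff q0 u - aff q0 v))) (at_right 0)"
      by (intro tendsto_intros)
    then have "\<forall>\<^sub>F t in at_right 0.
        (aff q u - aff q0 u) + t * ((aff q u - aff q v) - (aff q0 u - aff q0 v)) < 0"
      using gap by (intro order_tendstoD(2)) auto
    then show ?thesis unfolding aff_line by eventually_elim (simp add: algebra_simps)
  qed
  then have "\<forall>\<^sub>F t in at_right 0. \<forall>q\<in>A. aff q (u + t *\<^sub>R (u - v)) \<le> aff q0 (u + t *\<^sub>R (u - v))"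
    by (intro eventually_ball_finite assms(1)) blast
  then show ?thesis
  proof eventually_elim
    case (elim t)
    have "max_affine A (u + t *\<^sub>R (u - v)) = aff q0 (u + t *\<^sub>R (u - v))"
      unfolding max_eq using elim assms(1) q0 by (intro Max_eqI) (auto simp: active)
    then show ?case using q0 q0v by (simp add: active aff_line)
  qed
qed

lemma argmin_sum_max_affine_same_active:
  fixes A :: "'i \<Rightarrow> ('a::real_inner \<times> real) set" and I :: "'i set" and p :: "'i \<Rightarrow> real"
  defines "F \<equiv> \<lambda>x. \<Sum>i\<in>I. p i * max_affine (A i) x"
  assumes "finite I" and "\<forall>i\<in>I. finite (A i) \<and> A i \<noteq> {}" and "\<forall>y. F u \<le> F y"
    and "\<forall>i\<in>I. active_pieces (A i) v = active_pieces (A i) u"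
  shows "\<forall>y. F v \<le> F y"
proof -
  have "\<forall>\<^sub>F t in at_right 0. 0 < t \<and> (\<forall>i\<in>I.
      max_affine (A i) (u + t *\<^sub>R (u - v)) = (1 + t) * max_affine (A i) u - t * max_affine (A i) v)"
    using assms(2-5) eventually_at_right_less[of 0]
    by (intro eventually_conj eventually_ball_finite ballI max_affine_extrapolate) auto
  then obtain t where t: "0 < t" and ext: "\<forall>i\<in>I.
      max_affine (A i) (u + t *\<^sub>R (u - v)) = (1 + t) * max_affine (A i) u - t * max_affine (A i) v"
    using eventually_happens'[OF trivial_limit_at_right_real] by blast
  define w where "w = u + t *\<^sub>R (u - v)"
  have ext_w: "max_affine (A i) w = (1 + t) * max_affine (A i) u - t * max_affine (A i) v"
    if "i \<in> I" for i
    using ext that by (simp add: w_def)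
  have "F w = (\<Sum>i\<in>I. (1 + t) * (p i * max_affine (A i) u) - t * (p i * max_affine (A i) v))"
    unfolding F_def by (intro sum.cong refl) (simp add: ext_w algebra_simps)
  also have "\<dots> = (1 + t) * F u - t * F v"
    by (simp add: F_def sum_subtractf sum_distrib_left)
  finally have "F w = (1 + t) * F u - t * F v" .
  moreover have "F u \<le> F w" using assms(4) by blast
  ultimately have "t * F v \<le> t * F u" by (simp add: algebra_simps)
  then have "F v \<le> F u" using t by (simp add: mult_le_cancel_left_pos)
  then show ?thesis using assms(4) by (meson order_trans)
qed

lemma finite_saturated_family:
  assumes "finite (range g)" and "\<And>M u v. M \<in> \<M> \<Longrightarrow> u \<in> M \<Longrightarrow> g v = g u \<Longrightarrow> v \<in> M"
  shows "finite \<M>"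
proof (rule finite_subset)
  show "\<M> \<subseteq> (\<lambda>T. g -` T) ` Pow (range g)"
  proof
    fix M assume "M \<in> \<M>"
    then have "M = g -` (g ` M)" using assms(2) by (auto simp: image_iff)
    then show "M \<in> (\<lambda>T. g -` T) ` Pow (range g)" by blast
  qed
qed (use assms(1) in simp)

lemma polyhedral_loss_max_affine:
  assumes "polyhedral_loss L"
  obtains A where "\<forall>y. finite (A y) \<and> A y \<noteq> {}" and "L = (\<lambda>u y. max_affine (A y) u)"
proof -
  have "\<forall>y. \<exists>A. finite A \<and> A \<noteq> {} \<and> (\<forall>u. L u y = max_affine A u)"
    using assms by (simp add: polyhedral_loss_def max_affine_def)
  then obtain A where "\<forall>y. finite (A y) \<and> A y \<noteq> {} \<and> (\<forall>u. L u y = max_affine (A y) u)"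
    by metis
  then show ?thesis by (intro that[of A]) (auto simp: fun_eq_iff)
qed

lemma finite_range_active_pieces:
  fixes A :: "'i::finite \<Rightarrow> ('a::real_inner \<times> real) set"
  assumes "\<forall>i. finite (A i)"
  shows "finite (range (\<lambda>x i. active_pieces (A i) x))"
proof (rule finite_subset)
  show "range (\<lambda>x i. active_pieces (A i) x) \<subseteq> Pi UNIV (\<lambda>i. Pow (A i))"
    by (auto simp: active_pieces_def)
  show "finite (Pi UNIV (\<lambda>i. Pow (A i)))"
    using assms by (simp add: finite_PiE flip: PiE_UNIV_domain)
qed

lemma exp_loss_max_affine:
  assumes "\<forall>y. finite (A y) \<and> A y \<noteq> {}" and "p \<in> prob_simplex"
  shows "exp_loss (\<lambda>u y. max_affine (A y) u) p = max_affine (weighted_sum_pieces p UNIV A)"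
  using assms by (auto simp: exp_loss_def prob_simplex_def sum_max_affine fun_eq_iff)

lemma exp_loss_max_affine_attains_min:
  assumes A: "\<forall>y. finite (A y) \<and> A y \<noteq> {}" and "nonneg_loss (\<lambda>u y. max_affine (A y) u)"
    and p: "p \<in> prob_simplex"
  shows "\<exists>u. \<forall>v. exp_loss (\<lambda>u y. max_affine (A y) u) p u \<le> exp_loss (\<lambda>u y. max_affine (A y) u) p v"
proof -
  have B: "finite (weighted_sum_pieces p UNIV A)" "weighted_sum_pieces p UNIV A \<noteq> {}"
    using weighted_sum_pieces_finite_nonempty[of UNIV A] A by auto
  have "0 \<le> exp_loss (\<lambda>u y. max_affine (A y) u) p u" for u
    using assms(2) p by (auto simp: exp_loss_def prob_simplex_def nonneg_loss_def sum_nonneg)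
  then have "\<forall>u. 0 \<le> max_affine (weighted_sum_pieces p UNIV A) u"
    by (simp add: exp_loss_max_affine[OF A p])
  then show ?thesis
    unfolding exp_loss_max_affine[OF A p] by (rule max_affine_attains_min[OF B])
qed

lemma polyhedron_prop_of_max_affine:
  fixes A :: "'y::finite \<Rightarrow> ('a::euclidean_space \<times> real) set"
  assumes A: "\<forall>y. finite (A y) \<and> A y \<noteq> {}" and p: "p \<in> prob_simplex"
  shows "polyhedron (prop_of (\<lambda>u y. max_affine (A y) u) p)"
proof (cases "prop_of (\<lambda>u y. max_affine (A y) u) p = {}")
  case False
  then obtain u where "u \<in> prop_of (\<lambda>u y. max_affine (A y) u) p" by blast
  then have "prop_of (\<lambda>u y. max_affine (A y) u) p =
      {v. max_affine (weighted_sum_pieces p UNIV A) v \<le> max_affine (weighted_sum_pieces p UNIV A) u}"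
    by (auto simp: prop_of_def exp_loss_max_affine[OF A p] intro: order_trans)
  moreover have B: "finite (weighted_sum_pieces p UNIV A)" "weighted_sum_pieces p UNIV A \<noteq> {}"
    using weighted_sum_pieces_finite_nonempty[of UNIV A] A by auto
  ultimately show ?thesis using polyhedron_sublevel_max_affine[OF B] by simp
qed simp

lemma prop_of_max_affine_same_active:
  assumes "\<forall>y. finite (A y) \<and> A y \<noteq> {}" and "u \<in> prop_of (\<lambda>u y. max_affine (A y) u) p"
    and "\<forall>y. active_pieces (A y) v = active_pieces (A y) u"
  shows "v \<in> prop_of (\<lambda>u y. max_affine (A y) u) p"
  using argmin_sum_max_affine_same_active[of UNIV A p u v] assms
  by (simp add: prop_of_def exp_loss_def)

theorem lemma2:
  fixes L :: "real^'d \<Rightarrow> 'y::finite \<Rightarrow> real"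
  assumes "nonneg_loss L" and "polyhedral_loss L"
  shows "minimizable L
    \<and> (\<forall>p\<in>prob_simplex. prop_of L p \<noteq> {})
    \<and> finite (prop_of L ` prob_simplex)
    \<and> (\<forall>S\<in>prop_of L ` prob_simplex. closed S \<and> polyhedron S)"
proof -
  obtain A where A: "\<forall>y. finite (A y) \<and> A y \<noteq> {}" and L: "L = (\<lambda>u y. max_affine (A y) u)"
    using polyhedral_loss_max_affine[OF assms(2)] by blast
  have min: "\<exists>u. \<forall>v. exp_loss L p u \<le> exp_loss L p v" if "p \<in> prob_simplex" for p
    using exp_loss_max_affine_attains_min[OF A _ that] assms(1) by (simp add: L)
  have "polyhedron (prop_of L p)" if "p \<in> prob_simplex" for p
    using polyhedron_prop_of_max_affine[OF A that] by (simp add: L)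
  moreover have "finite (prop_of L ` prob_simplex)"
  proof (rule finite_saturated_family)
    show "finite (range (\<lambda>u y. active_pieces (A y) u))"
      using A by (intro finite_range_active_pieces) blast
    show "v \<in> M" if "M \<in> prop_of L ` prob_simplex" and "u \<in> M"
      and "(\<lambda>y. active_pieces (A y) v) = (\<lambda>y. active_pieces (A y) u)" for M u v
      using that prop_of_max_affine_same_active[OF A] by (auto simp: L fun_eq_iff)
  qed
  ultimately show ?thesis
    using min polyhedron_imp_closed by (auto simp: minimizable_def prop_of_def)
qed

end
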